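(* There is an absolute constant $c_0>0$ such that for every $\epsilon\in(0,1/2]$ and every integer $d\ge 1$, with $n=2^{d+1}-2$, the binary-tree function $f:\{0,1\}^n\to\{0,1\}$ of depth $d$ (which is computable by a read-once formula) satisfies, under unit costs ($c_i=1$ for all $i$) and $p_i=\frac{1+\epsilon}{2}$ for all $i$, $$\mathsf{OPT}_{\mathcal N}(f,c,p)\ge c_0\,\epsilon^3\, n^{1-2\epsilon/\ln 2}\cdot \mathsf{OPT}_{\mathcal A}(f,c,p).$$
   Context: Stochastic Boolean Function Evaluation (SBFE) setup: $f:\{0,1\}^n\to\{0,1\}$ is a known Boolean function, $c\in\mathbb{R}_{>0}^n$ a cost vector and $p\in(0,1)^n$ a probability vector. The unknown input $x\in\{0,1\}^n$ is random with independent coordinates and $\Pr(x_i=1)=p_i$. The value $x_i$ can only be learned by testing variable $i$, at cost $c_i$. A strategy tests variables sequentially until $f(x)$ is determined, i.e. until $f(x')=f(x)$ for every $x'$ agreeing with $x$ on all tested coordinates. An adaptive strategy is a decision tree (the next test may depend on previous outcomes); a non-adaptive strategy is a fixed permutation of $[n]$, with variables tested in that order until $f(x)$ is determined. $\mathrm{cost}_{c,p}(f,S)$ is the expected total cost of tests performed by $S$ for random $x$. $\mathsf{OPT}_{\mathcal A}(f,c,p)$ (resp. $\mathsf{OPT}_{\mathcal N}(f,c,p)$) is the minimum of $\mathrm{cost}_{c,p}(f,S)$ over all adaptive (resp. non-adaptive) strategies. Binary-tree function of depth $d$: take the complete binary tree of depth $d$ (root at depth $0$, $2^d$ leaves at depth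 $d$); it has $n=2^{d+1}-2$ edges, numbered $1,\dots,n$, and variable $x_i$ is associated with edge $i$. A leaf is alive if $x_i=1$ for every edge $i$ on the path from the root to that leaf. Then $f(x)=1$ iff at least one leaf is alive. (A read-once formula is a tree whose internal nodes are labeled $\wedge$ or $\vee$ and whose leaves are labeled by distinct variables.) *)

theory Defs
  imports Complex_Main
begin

text \<open>Stochastic Boolean Function Evaluation. Variables are indexed by 0..n-1.
  An input is a function nat => bool which is False outside {0..<n}.\<close>

definition cube :: "nat \<Rightarrow> (nat \<Rightarrow> bool) set" where
  "cube n = {x. \<forall>i. n \<le> i \<longrightarrow> \<not> x i}"

definition prob :: "(nat \<Rightarrow> real) \<Rightarrow> nat \<Rightarrow> (nat \<Rightarrow> bool) \<Rightarrow> real" where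
  "prob p n x = (\<Prod>i<n. if x i then p i else 1 - p i)"

definition determined :: "((nat \<Rightarrow> bool) \<Rightarrow> bool) \<Rightarrow> nat \<Rightarrow> nat set \<Rightarrow> (nat \<Rightarrow> bool) \<Rightarrow> bool" where
  "determined f n T x \<longleftrightarrow> (\<forall>y\<in>cube n. (\<forall>i\<in>T. y i = x i) \<longrightarrow> f y = f x)"

definition perms :: "nat \<Rightarrow> nat list set" where
  "perms n = {\<pi>. distinct \<pi> \<and> set \<pi> = {..<n}}"

definition na_stop :: "((nat \<Rightarrow> bool) \<Rightarrow> bool) \<Rightarrow> nat \<Rightarrow> nat list \<Rightarrow> (nat \<Rightarrow> bool) \<Rightarrow> nat" where
  "na_stop f n \<pi> x = (LEAST k. determined f n (set (take k \<pi>)) x)"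

definition na_cost :: "((nat \<Rightarrow> bool) \<Rightarrow> bool) \<Rightarrow> nat \<Rightarrow> (nat \<Rightarrow> real) \<Rightarrow> (nat \<Rightarrow> real)
    \<Rightarrow> nat list \<Rightarrow> real" where
  "na_cost f n c p \<pi> =
     (\<Sum>x\<in>cube n. prob p n x * sum_list (map c (take (na_stop f n \<pi> x) \<pi>)))"

definition OPT_N :: "((nat \<Rightarrow> bool) \<Rightarrow> bool) \<Rightarrow> nat \<Rightarrow> (nat \<Rightarrow> real) \<Rightarrow> (nat \<Rightarrow> real) \<Rightarrow> real" where
  "OPT_N f n c p = Inf (na_cost f n c p ` perms n)"

datatype dtree = Leaf | Node nat dtree dtree

fun dt_path :: "dtree \<Rightarrow> (nat \<Rightarrow> bool) \<Rightarrow> nat list" where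
  "dt_path Leaf x = []"
| "dt_path (Node i l r) x = i # dt_path (if x i then r else l) x"

definition valid_dt :: "((nat \<Rightarrow> bool) \<Rightarrow> bool) \<Rightarrow> nat \<Rightarrow> dtree \<Rightarrow> bool" where
  "valid_dt f n t \<longleftrightarrow> (\<forall>x\<in>cube n. set (dt_path t x) \<subseteq> {..<n} \<and> determined f n (set (dt_path t x)) x)"

definition dt_cost :: "nat \<Rightarrow> (nat \<Rightarrow> real) \<Rightarrow> (nat \<Rightarrow> real) \<Rightarrow> dtree \<Rightarrow> real" where
  "dt_cost n c p t = (\<Sum>x\<in>cube n. prob p n x * sum_list (map c (dt_path t x)))"

definition OPT_A :: "((nat \<Rightarrow> bool) \<Rightarrow> bool) \<Rightarrow> nat \<Rightarrow> (nat \<Rightarrow> real) \<Rightarrow> (nat \<Rightarrow> real) \<Rightarrow> real" where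
  "OPT_A f n c p = Inf (dt_cost n c p ` {t. valid_dt f n t})"

text \<open>Heap numbering of the complete binary tree: nodes 1..2^(d+1)-1, root 1, children of v are
  2v and 2v+1. The edge entering node v (v >= 2) carries variable v-2, so the n = 2^(d+1)-2 edges
  carry variables 0..n-1. Leaves are v in [2^d, 2^(d+1)); the edges on the root-leaf path of v are
  those entering v div 2^k for k < d.\<close>
definition bintree_fun :: "nat \<Rightarrow> (nat \<Rightarrow> bool) \<Rightarrow> bool" where
  "bintree_fun d x \<longleftrightarrow> (\<exists>v\<in>{2^d..<2^(d+1)}. \<forall>k<d. x (v div 2^k - 2))"

end

theory Submission
  imports Defs
begin

text \<open>Let \<open>p = (1 + \<epsilon>)/2\<close>. A subtree of height \<open>h\<close> is alive with probability \<open>Q h\<close>, where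
  \<open>Q 0 = 1\<close> and \<open>Q (h+1) = 1 - (1 - p Q h)^2\<close>; inductively \<open>Q h \<ge> \<epsilon>\<close>.
  The adaptive depth-first strategy, which enters the subtree below an edge only when that edge is
  present, has expected cost \<open>C d\<close> with \<open>C (h+1) = 2 + 2p C h\<close>, so \<open>C d \<le> 2(1 + \<epsilon>)^d / \<epsilon>\<close>.
  A fixed test order can certify \<open>f x = 1\<close> only after testing a whole root-leaf path; the first
  \<open>m\<close> tests contain at most \<open>m\<close> such paths, each present with probability \<open>p^d\<close>. Hence with
  probability at least \<open>\<epsilon> - m p^d\<close> more than \<open>m\<close> tests are made, and \<open>m = \<lfloor>\<epsilon> / (2 p^d)\<rfloor>\<close>
  gives a non-adaptive cost of at least \<open>\<epsilon>^2 / (4 p^d)\<close>. The two bounds differ by the factor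
  \<open>\<epsilon>^3 2^d / (8 (1 + \<epsilon>)^(2d))\<close>, and \<open>(1 + \<epsilon>)^(2d) \<le> exp (2\<epsilon>d) = (2^d) powr (2\<epsilon> / ln 2)\<close>.\<close>

section \<open>Expectation on the product measure of the cube\<close>

definition cube_expect :: "nat \<Rightarrow> (nat \<Rightarrow> real) \<Rightarrow> ((nat \<Rightarrow> bool) \<Rightarrow> real) \<Rightarrow> real" where
  "cube_expect n p h = (\<Sum>x\<in>cube n. prob p n x * h x)"

definition depends_only :: "((nat \<Rightarrow> bool) \<Rightarrow> 'a) \<Rightarrow> nat set \<Rightarrow> bool" where
  "depends_only h A \<longleftrightarrow> (\<forall>x y. (\<forall>i\<in>A. x i = y i) \<longrightarrow> h x = h y)"

lemma cube_0: "cube 0 = {\<lambda>_. False}"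
  by (auto simp: cube_def)

lemma cube_Suc: "cube (Suc n) = (\<lambda>(x, b). x(n := b)) ` (cube n \<times> UNIV)"
proof (intro set_eqI iffI)
  fix y assume "y \<in> cube (Suc n)"
  then have "y(n := False) \<in> cube n" by (auto simp: cube_def)
  moreover have "y = (\<lambda>(x, b). x(n := b)) (y(n := False), y n)" by auto
  ultimately show "y \<in> (\<lambda>(x, b). x(n := b)) ` (cube n \<times> UNIV)" by blast
qed (auto simp: cube_def)

lemma inj_on_cube_extend: "inj_on (\<lambda>(x, b). x(n := b)) (cube n \<times> UNIV)"
proof (rule inj_onI, clarify)
  fix x b x' b' assume "x \<in> cube n" "x' \<in> cube n" and eq: "x(n := b) = x'(n := b')"
  have "x = x'"
  proof
    fix i show "x i = x' i"
      using fun_cong[OF eq, of i] \<open>x \<in> cube n\<close> \<open>x' \<in> cube n\<close> by (cases "i = n") (auto simp: cube_def)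
  qed
  then show "x = x' \<and> b = b'" using fun_cong[OF eq, of n] by auto
qed

lemma prob_nonneg: "(\<And>i. 0 \<le> p i \<and> p i \<le> 1) \<Longrightarrow> 0 \<le> prob p n x"
  unfolding prob_def by (rule prod_nonneg) auto

lemma cube_expect_0: "cube_expect 0 p h = h (\<lambda>_. False)"
  by (simp add: cube_expect_def prob_def cube_0)

lemma cube_expect_Suc:
  "cube_expect (Suc n) p h =
     p n * cube_expect n p (\<lambda>x. h (x(n := True))) + (1 - p n) * cube_expect n p (\<lambda>x. h (x(n := False)))"
proof -
  have prob_extend: "prob p (Suc n) (x(n := b)) = prob p n x * (if b then p n else 1 - p n)"
    if "x \<in> cube n" for x b
    unfolding prob_def by (simp add: prod.lessThan_Suc)
  have "cube_expect (Suc n) p h = (\<Sum>(x, b)\<in>cube n \<times> UNIV. prob p (Suc n) (x(n := b)) * h (x(n := b)))"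
    unfolding cube_expect_def cube_Suc
    by (subst sum.reindex[OF inj_on_cube_extend]) (simp add: case_prod_beta')
  also have "\<dots> = (\<Sum>x\<in>cube n. \<Sum>b\<in>UNIV. prob p (Suc n) (x(n := b)) * h (x(n := b)))"
    by (rule sum.cartesian_product[symmetric])
  also have "\<dots> = (\<Sum>x\<in>cube n. p n * (prob p n x * h (x(n := True))) + (1 - p n) * (prob p n x * h (x(n := False))))"
    by (rule sum.cong) (auto simp: UNIV_bool prob_extend)
  also have "\<dots> = p n * cube_expect n p (\<lambda>x. h (x(n := True))) + (1 - p n) * cube_expect n p (\<lambda>x. h (x(n := False)))"
    unfolding cube_expect_def by (simp add: sum.distrib sum_distrib_left)
  finally show ?thesis .
qed

lemma cube_expect_const [simp]: "cube_expect n p (\<lambda>_. c) = c"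
  by (induction n) (simp_all add: cube_expect_0 cube_expect_Suc algebra_simps)

lemma cube_expect_cong: "(\<And>x. x \<in> cube n \<Longrightarrow> f x = g x) \<Longrightarrow> cube_expect n p f = cube_expect n p g"
  unfolding cube_expect_def by (rule sum.cong) auto

lemma cube_expect_add: "cube_expect n p (\<lambda>x. f x + g x) = cube_expect n p f + cube_expect n p g"
  unfolding cube_expect_def by (simp add: sum.distrib algebra_simps)

lemma cube_expect_diff: "cube_expect n p (\<lambda>x. f x - g x) = cube_expect n p f - cube_expect n p g"
  unfolding cube_expect_def by (simp add: sum_subtractf algebra_simps)

lemma cube_expect_cmult: "cube_expect n p (\<lambda>x. c * f x) = c * cube_expect n p f"
  unfolding cube_expect_def by (simp add: sum_distrib_left algebra_simps)

lemma cube_expect_sum: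
  "finite W \<Longrightarrow> cube_expect n p (\<lambda>x. \<Sum>w\<in>W. f w x) = (\<Sum>w\<in>W. cube_expect n p (f w))"
  unfolding cube_expect_def by (simp add: sum_distrib_left sum.swap[of _ W])

lemma cube_expect_mono:
  assumes "\<And>i. 0 \<le> p i \<and> p i \<le> 1" and "\<And>x. x \<in> cube n \<Longrightarrow> f x \<le> g x"
  shows "cube_expect n p f \<le> cube_expect n p g"
  unfolding cube_expect_def using assms by (intro sum_mono mult_left_mono prob_nonneg) auto

lemma depends_only_comp: "depends_only f A \<Longrightarrow> depends_only (\<lambda>x. F (f x)) A"
  unfolding depends_only_def by metis

lemma depends_only_combine:
  "depends_only f A \<Longrightarrow> depends_only g B \<Longrightarrow> depends_only (\<lambda>x. F (f x) (g x)) (A \<union> B)"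
  unfolding depends_only_def by (metis UnCI)

lemma depends_only_coord: "depends_only (\<lambda>x. F (x a)) {a}"
  unfolding depends_only_def by auto

lemma depends_only_fun_upd: "depends_only f A \<Longrightarrow> depends_only (\<lambda>x. f (x(n := b))) A"
  unfolding depends_only_def by auto

lemma depends_only_fun_upd_other: "depends_only f A \<Longrightarrow> n \<notin> A \<Longrightarrow> (\<lambda>x. f (x(n := b))) = f"
  unfolding depends_only_def by (rule ext) (metis fun_upd_other)

lemma cube_expect_indep:
  "A \<inter> B = {} \<Longrightarrow> depends_only f A \<Longrightarrow> depends_only g B \<Longrightarrow>
     cube_expect n p (\<lambda>x. f x * g x) = cube_expect n p f * cube_expect n p g"
proof (induction n arbitrary: f g)
  case 0 then show ?case by (simp add: cube_expect_0)
next
  case (Suc n)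
  have IH: "cube_expect n p (\<lambda>x. f (x(n := b)) * g (x(n := b))) =
      cube_expect n p (\<lambda>x. f (x(n := b))) * cube_expect n p (\<lambda>x. g (x(n := b)))" for b
    using Suc.prems by (intro Suc.IH depends_only_fun_upd)
  have "(\<forall>b. (\<lambda>x. f (x(n := b))) = f) \<or> (\<forall>b. (\<lambda>x. g (x(n := b))) = g)"
    using Suc.prems depends_only_fun_upd_other by blast
  then show ?case unfolding cube_expect_Suc IH by (auto simp: algebra_simps)
qed

lemma cube_expect_coord: "a < n \<Longrightarrow> cube_expect n p (\<lambda>x. of_bool (x a)) = p a"
proof (induction n)
  case (Suc m)
  show ?case
  proof (cases "a = m")
    case False
    then have "(\<lambda>x. of_bool ((x(m := b)) a)) = (\<lambda>x. of_bool (x a) :: real)" for b by auto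
    then show ?thesis using Suc False by (simp add: cube_expect_Suc algebra_simps)
  qed (simp add: cube_expect_Suc)
qed simp

lemma cube_expect_all_ones:
  "finite S \<Longrightarrow> S \<subseteq> {..<n} \<Longrightarrow> cube_expect n p (\<lambda>x. of_bool (\<forall>i\<in>S. x i)) = (\<Prod>i\<in>S. p i)"
proof (induction S rule: finite_induct)
  case (insert a S)
  have "cube_expect n p (\<lambda>x. of_bool (\<forall>i\<in>insert a S. x i)) =
      cube_expect n p (\<lambda>x. of_bool (x a) * of_bool (\<forall>i\<in>S. x i))"
    by (rule cube_expect_cong) simp
  also have "\<dots> = cube_expect n p (\<lambda>x. of_bool (x a)) * cube_expect n p (\<lambda>x. of_bool (\<forall>i\<in>S. x i))"
    by (rule cube_expect_indep[of "{a}" S]) (use insert in \<open>auto simp: depends_only_def\<close>)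
  finally show ?case using insert by (simp add: cube_expect_coord)
qed simp

section \<open>Subtrees of the heap-numbered binary tree\<close>

abbreviation num_edges :: "nat \<Rightarrow> nat" where
  "num_edges d \<equiv> 2^(d+1) - 2"

text \<open>\<open>w\<close> ranges over the descendants of \<open>v\<close> lying \<open>h\<close> levels below it, \<open>u\<close> over the
  descendants at most \<open>h\<close> levels below it.\<close>
definition subtree_alive :: "nat \<Rightarrow> nat \<Rightarrow> (nat \<Rightarrow> bool) \<Rightarrow> bool" where
  "subtree_alive v h x \<longleftrightarrow> (\<exists>w. w div 2^h = v \<and> (\<forall>k<h. x (w div 2^k - 2)))"

definition subtree_vars :: "nat \<Rightarrow> nat \<Rightarrow> nat set" where
  "subtree_vars v h = {u - 2 | u j. 0 < j \<and> j \<le> h \<and> u div 2^j = v}"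

definition branch_vars :: "nat \<Rightarrow> nat \<Rightarrow> nat set" where
  "branch_vars c h = insert (c - 2) (subtree_vars c h)"

lemma div_eq_iff_bounds: "0 < (m::nat) \<Longrightarrow> w div m = a \<longleftrightarrow> a * m \<le> w \<and> w < (a + 1) * m"
  by (meson div_less_iff_less_mult le_antisym less_add_one
    less_eq_div_iff_mult_less_eq less_inc_imp_less_eq)

lemma div_power2_add: "(u::nat) div 2^(a + b) = u div 2^a div 2^b"
  by (simp add: power_add div_mult2_eq)

lemma div_power2_less: "0 < j \<Longrightarrow> 0 < (u::nat) \<Longrightarrow> u div 2^j < u"
  using one_less_power[of "2::nat" j] by (simp add: div_less_dividend)

lemma bintree_fun_eq_subtree_alive: "bintree_fun d = subtree_alive 1 d"
proof -
  have "((w::nat) div 2^d = 1) \<longleftrightarrow> w \<in> {2^d..<2^(d+1)}" for w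
    by (simp add: div_eq_iff_bounds mult_2)
  then show ?thesis
    unfolding bintree_fun_def subtree_alive_def by (auto simp: fun_eq_iff)
qed

lemma subtree_alive_0 [simp]: "subtree_alive v 0 x"
  unfolding subtree_alive_def by auto

lemma subtree_alive_Suc:
  "subtree_alive v (Suc h) x \<longleftrightarrow>
     (x (2*v - 2) \<and> subtree_alive (2*v) h x) \<or> (x (2*v - 1) \<and> subtree_alive (2*v + 1) h x)"
proof -
  have div_Suc: "w div 2^(Suc h) = w div 2^h div 2" for w :: nat
    by (subst power_Suc2) (rule div_mult2_eq)
  have div2: "u div 2 = v \<longleftrightarrow> u = 2*v \<or> u = 2*v + 1" for u :: nat
    by auto
  show ?thesis
    unfolding subtree_alive_def div_Suc div2 by (auto simp: less_Suc_eq)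
qed

lemma path_var_in_subtree_vars:
  assumes "w div 2^h = v" "k < h"
  shows "w div 2^k - 2 \<in> subtree_vars v h"
proof -
  have "w div 2^k div 2^(h - k) = v"
    using assms div_power2_add[of w k "h - k"] by simp
  then show ?thesis
    unfolding subtree_vars_def using assms(2)
    by (intro CollectI exI[of _ "w div 2^k"] exI[of _ "h - k"]) auto
qed

lemma depends_only_subtree_alive: "depends_only (subtree_alive v h) (subtree_vars v h)"
proof -
  have "subtree_alive v h y" if "subtree_alive v h x" "\<forall>i\<in>subtree_vars v h. x i = y i" for x y
    using that path_var_in_subtree_vars unfolding subtree_alive_def by blast
  then show ?thesis
    unfolding depends_only_def by (metis (mono_tags))
qed

lemma branch_vars_subset: "branch_vars (2*v) h \<union> branch_vars (2*v + 1) h \<subseteq> subtree_vars v (Suc h)"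
proof -
  have child: "c div 2 = v" if "c = 2*v \<or> c = 2*v + 1" for c
    using that by auto
  have "c - 2 \<in> subtree_vars v (Suc h)" if "c div 2 = v" for c
    unfolding subtree_vars_def using that by force
  moreover have "subtree_vars c h \<subseteq> subtree_vars v (Suc h)" if "c div 2 = v" for c
  proof
    fix i assume "i \<in> subtree_vars c h"
    then obtain u j where "i = u - 2" "0 < j" "j \<le> h" "u div 2^j = c"
      unfolding subtree_vars_def by blast
    moreover have "u div 2^(j + 1) = v"
      using \<open>u div 2^j = c\<close> that div_power2_add[of u j 1] by simp
    ultimately show "i \<in> subtree_vars v (Suc h)"
      unfolding subtree_vars_def by force
  qed
  ultimately show ?thesis
    unfolding branch_vars_def using child by blast
qed

lemma edge_var_notin_subtree_vars:
  assumes "2 \<le> c"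
  shows "c - 2 \<notin> subtree_vars c h"
proof
  assume "c - 2 \<in> subtree_vars c h"
  then obtain u j where "c - 2 = u - 2" "0 < j" "u div 2^j = c"
    unfolding subtree_vars_def by blast
  moreover from this have "c \<le> u" by (metis div_le_dividend)
  ultimately show False using assms div_power2_less[of j u] by simp
qed

lemma branch_vars_ancestor:
  assumes "i \<in> branch_vars c h"
  shows "\<exists>u j. i = u - 2 \<and> u div 2^j = c"
proof -
  have "c div 2^0 = c" by simp
  then show ?thesis
    using assms unfolding branch_vars_def subtree_vars_def by blast
qed

lemma sibling_descendants_disjoint:
  fixes u v :: nat
  assumes "1 \<le> v" "u div 2^j = 2*v" "u div 2^j' = 2*v + 1"
  shows False
proof (cases "j \<le> j'")
  case True
  then have "2*v + 1 = 2*v div 2^(j' - j)"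
    using assms div_power2_add[of u j "j' - j"] by simp
  then show False using div_le_dividend[of "2*v" "2^(j' - j)"] by simp
next
  case False
  then have "2*v = (2*v + 1) div 2^(j - j')"
    using assms div_power2_add[of u j' "j - j'"] by simp
  also have "\<dots> \<le> (2*v + 1) div 2"
    using False power_increasing[of 1 "j - j'" "2::nat"] by (intro div_le_mono2) auto
  finally show False using assms(1) by simp
qed

lemma branch_vars_disjoint: "1 \<le> v \<Longrightarrow> branch_vars (2*v) h \<inter> branch_vars (2*v + 1) h' = {}"
proof (rule ccontr)
  assume v: "1 \<le> v" and "branch_vars (2*v) h \<inter> branch_vars (2*v + 1) h' \<noteq> {}"
  then obtain u j u' j' where u: "u - 2 = u' - 2" "u div 2^j = 2*v" "u' div 2^j' = 2*v + 1"
    using branch_vars_ancestor by (metis disjoint_iff)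
  have "2 \<le> u" "2 \<le> u'"
    using u v div_le_dividend[of u "2^j"] div_le_dividend[of u' "2^j'"] by linarith+
  then have "u = u'" using u(1) by simp
  then show False using sibling_descendants_disjoint[OF v u(2)] u(3) by simp
qed

lemma subtree_vars_root: "subtree_vars 1 d \<subseteq> {..<num_edges d}"
proof
  fix i assume "i \<in> subtree_vars 1 d"
  then obtain u j where i: "i = u - 2" and j: "0 < j" "j \<le> d" and u: "u div 2^j = 1"
    unfolding subtree_vars_def by blast
  have "2^j \<le> u" "u < 2^(j+1)" using u by (simp_all add: div_eq_iff_bounds mult_2)
  moreover have "(2::nat) \<le> 2^j" "(2::nat)^(j+1) \<le> 2^(d+1)"
    using j power_increasing[of 1 j "2::nat"] power_increasing[of "j+1" "d+1" "2::nat"] by simp_all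
  ultimately have "2 \<le> u" "u < 2^(d+1)" by linarith+
  then show "i \<in> {..<num_edges d}" using i by auto
qed

lemma depends_only_branch:
  assumes "depends_only g (subtree_vars c h)"
  shows "depends_only (\<lambda>x. F (x (c - 2)) (g x)) (branch_vars c h)"
proof -
  have "depends_only (\<lambda>x. F (x (c - 2)) (g x)) ({c - 2} \<union> subtree_vars c h)"
    using depends_only_combine[OF depends_only_coord[of "\<lambda>b. b" "c - 2"] assms, of F] by simp
  then show ?thesis by (simp add: branch_vars_def)
qed

lemma cube_expect_edge_times:
  fixes pp :: real
  assumes "2 \<le> c" "c - 2 < n" "depends_only g (subtree_vars c h)"
  shows "cube_expect n (\<lambda>_. pp) (\<lambda>x. of_bool (x (c - 2)) * g x) = pp * cube_expect n (\<lambda>_. pp) g"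
proof -
  have "cube_expect n (\<lambda>_. pp) (\<lambda>x. of_bool (x (c - 2)) * g x) =
      cube_expect n (\<lambda>_. pp) (\<lambda>x. of_bool (x (c - 2))) * cube_expect n (\<lambda>_. pp) g"
    using edge_var_notin_subtree_vars[OF assms(1)]
    by (intro cube_expect_indep[OF _ depends_only_coord assms(3)]) auto
  then show ?thesis using cube_expect_coord[OF assms(2)] by simp
qed

section \<open>The adaptive depth-first strategy\<close>

fun alive_prob :: "real \<Rightarrow> nat \<Rightarrow> real" where
  "alive_prob pp 0 = 1"
| "alive_prob pp (Suc h) = 1 - (1 - pp * alive_prob pp h)^2"

lemma cube_expect_subtree_alive:
  "1 \<le> v \<Longrightarrow> subtree_vars v h \<subseteq> {..<n} \<Longrightarrow>
     cube_expect n (\<lambda>_. pp) (\<lambda>x. of_bool (subtree_alive v h x)) = alive_prob pp h"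
proof (induction h arbitrary: v)
  case (Suc h)
  let ?E = "cube_expect n (\<lambda>_. pp)"
  define L :: "(nat \<Rightarrow> bool) \<Rightarrow> real"
    where "L x = 1 - of_bool (x (2*v - 2)) * of_bool (subtree_alive (2*v) h x)" for x
  define R :: "(nat \<Rightarrow> bool) \<Rightarrow> real"
    where "R x = 1 - of_bool (x (2*v + 1 - 2)) * of_bool (subtree_alive (2*v + 1) h x)" for x
  have vars: "branch_vars (2*v) h \<subseteq> {..<n}" "branch_vars (2*v + 1) h \<subseteq> {..<n}"
    using branch_vars_subset Suc.prems(2) by blast+
  have "?E L = 1 - pp * alive_prob pp h"
  proof -
    have "?E (\<lambda>x. of_bool (x (2*v - 2)) * of_bool (subtree_alive (2*v) h x)) = pp * alive_prob pp h"
      using vars Suc.prems(1) Suc.IH[of "2*v"]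
      by (subst cube_expect_edge_times[where h = h])
        (auto simp: branch_vars_def depends_only_comp[OF depends_only_subtree_alive])
    then show ?thesis unfolding L_def by (simp add: cube_expect_diff)
  qed
  moreover have "?E R = 1 - pp * alive_prob pp h"
  proof -
    have "?E (\<lambda>x. of_bool (x (2*v + 1 - 2)) * of_bool (subtree_alive (2*v + 1) h x)) = pp * alive_prob pp h"
      using vars Suc.prems(1) Suc.IH[of "2*v + 1"]
      by (subst cube_expect_edge_times[where h = h])
        (auto simp: branch_vars_def depends_only_comp[OF depends_only_subtree_alive])
    then show ?thesis unfolding R_def by (simp add: cube_expect_diff)
  qed
  moreover have "?E (\<lambda>x. L x * R x) = ?E L * ?E R"
    unfolding L_def R_def
    by (rule cube_expect_indep[OF branch_vars_disjoint[OF Suc.prems(1), of h h]];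
        intro depends_only_branch depends_only_comp[OF depends_only_subtree_alive])
  moreover have "?E (\<lambda>x. of_bool (subtree_alive v (Suc h) x)) = ?E (\<lambda>x. 1 - L x * R x)"
    unfolding L_def R_def subtree_alive_Suc by (intro cube_expect_cong) auto
  moreover have "?E (\<lambda>x. 1 - L x * R x) = 1 - ?E (\<lambda>x. L x * R x)"
    by (simp add: cube_expect_diff)
  ultimately show ?case by (simp add: power2_eq_square)
qed simp

fun dfs_tests :: "nat \<Rightarrow> nat \<Rightarrow> (nat \<Rightarrow> bool) \<Rightarrow> nat list" where
  "dfs_tests v 0 x = []"
| "dfs_tests v (Suc h) x =
     (2*v - 2) # (if x (2*v - 2) then dfs_tests (2*v) h x else []) @
     (2*v - 1) # (if x (2*v - 1) then dfs_tests (2*v + 1) h x else [])"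

text \<open>\<open>K\<close> is the strategy to continue with once the subtree of \<open>v\<close> has been explored.\<close>
fun dfs_tree :: "nat \<Rightarrow> nat \<Rightarrow> dtree \<Rightarrow> dtree" where
  "dfs_tree v 0 K = K"
| "dfs_tree v (Suc h) K =
     (let R = Node (2*v - 1) K (dfs_tree (2*v + 1) h K) in Node (2*v - 2) R (dfs_tree (2*v) h R))"

lemma dt_path_dfs_tree: "dt_path (dfs_tree v h K) x = dfs_tests v h x @ dt_path K x"
  by (induction h arbitrary: v K) (auto simp: Let_def)

lemma dfs_tests_determine:
  "\<forall>i\<in>set (dfs_tests v h x). y i = x i \<Longrightarrow> subtree_alive v h y = subtree_alive v h x"
proof (induction h arbitrary: v)
  case (Suc h)
  have "x (2*v - 2) \<Longrightarrow> subtree_alive (2*v) h y = subtree_alive (2*v) h x"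
       "x (2*v - 1) \<Longrightarrow> subtree_alive (2*v + 1) h y = subtree_alive (2*v + 1) h x"
    using Suc.prems by (auto intro!: Suc.IH)
  then show ?case using Suc.prems unfolding subtree_alive_Suc by auto
qed simp

lemma set_dfs_tests: "set (dfs_tests v h x) \<subseteq> subtree_vars v h"
proof (induction h arbitrary: v)
  case (Suc h)
  then show ?case
    using branch_vars_subset[of v h] by (auto simp: branch_vars_def)
qed simp

lemma depends_only_dfs_tests: "depends_only (dfs_tests v h) (subtree_vars v h)"
proof (induction h arbitrary: v)
  case (Suc h)
  have "dfs_tests v (Suc h) x = dfs_tests v (Suc h) y" if "\<forall>i\<in>subtree_vars v (Suc h). x i = y i" for x y
  proof -
    have agree: "\<forall>i\<in>branch_vars c h. x i = y i" if "c = 2*v \<or> c = 2*v + 1" for c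
      using \<open>\<forall>i\<in>subtree_vars v (Suc h). x i = y i\<close> that branch_vars_subset by blast
    have "dfs_tests c h x = dfs_tests c h y" "x (c - 2) = y (c - 2)" if "c = 2*v \<or> c = 2*v + 1" for c
      using agree[OF that] Suc.IH[of c] unfolding depends_only_def branch_vars_def by simp_all
    from this[of "2*v"] this[of "2*v + 1"] show ?thesis by simp
  qed
  then show ?case unfolding depends_only_def by blast
qed (simp add: depends_only_def)

fun dfs_cost :: "real \<Rightarrow> nat \<Rightarrow> real" where
  "dfs_cost pp 0 = 0"
| "dfs_cost pp (Suc h) = 2 + 2 * pp * dfs_cost pp h"

lemma dfs_cost_closed_form: "dfs_cost pp h * (2*pp - 1) = 2 * ((2*pp)^h - 1)"
  by (induction h) (simp_all add: algebra_simps)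

lemma cube_expect_dfs_tests_length:
  "1 \<le> v \<Longrightarrow> subtree_vars v h \<subseteq> {..<n} \<Longrightarrow>
     cube_expect n (\<lambda>_. pp) (\<lambda>x. real (length (dfs_tests v h x))) = dfs_cost pp h"
proof (induction h arbitrary: v)
  case (Suc h)
  let ?E = "cube_expect n (\<lambda>_. pp)"
  have vars: "branch_vars (2*v) h \<subseteq> {..<n}" "branch_vars (2*v + 1) h \<subseteq> {..<n}"
    using branch_vars_subset Suc.prems(2) by blast+
  have child: "?E (\<lambda>x. of_bool (x (c - 2)) * real (length (dfs_tests c h x))) = pp * dfs_cost pp h"
    if "c = 2*v \<or> c = 2*v + 1" for c
    using that vars Suc.prems(1) Suc.IH[of c] depends_only_comp[OF depends_only_dfs_tests, of _ c h]
    by (subst cube_expect_edge_times[where h = h]) (auto simp: branch_vars_def)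
  have "real (length (dfs_tests v (Suc h) x)) =
      2 + of_bool (x (2*v - 2)) * real (length (dfs_tests (2*v) h x))
        + of_bool (x (2*v + 1 - 2)) * real (length (dfs_tests (2*v + 1) h x))" for x
    by simp
  then show ?case
    using child[of "2*v"] child[of "2*v + 1"] by (simp only: cube_expect_add cube_expect_const) simp
qed simp

lemma OPT_A_le_dt_cost:
  assumes "valid_dt f n t" "\<And>i. 0 \<le> c i" "\<And>i. 0 \<le> p i \<and> p i \<le> 1"
  shows "OPT_A f n c p \<le> dt_cost n c p t"
proof -
  have "0 \<le> dt_cost n c p t'" for t'
    unfolding dt_cost_def using assms(2,3)
    by (intro sum_nonneg mult_nonneg_nonneg prob_nonneg sum_list_nonneg) auto
  then have "bdd_below (dt_cost n c p ` {t. valid_dt f n t})"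
    by (intro bdd_belowI[of _ 0]) auto
  then show ?thesis
    unfolding OPT_A_def using assms(1) by (intro cInf_lower) auto
qed

lemma OPT_N_ge:
  assumes "\<And>\<pi>. \<pi> \<in> perms n \<Longrightarrow> b \<le> na_cost f n c p \<pi>"
  shows "b \<le> OPT_N f n c p"
proof -
  have "[0..<n] \<in> perms n" by (simp add: perms_def lessThan_atLeast0)
  then show ?thesis
    unfolding OPT_N_def using assms by (intro cInf_greatest) auto
qed

lemma OPT_A_bintree_le_dfs_cost:
  assumes "0 \<le> pp" "pp \<le> 1"
  shows "OPT_A (bintree_fun d) (num_edges d) (\<lambda>_. 1) (\<lambda>_. pp) \<le> dfs_cost pp d"
proof -
  define t where "t = dfs_tree 1 d Leaf"
  have path: "dt_path t x = dfs_tests 1 d x" for x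
    by (simp add: t_def dt_path_dfs_tree)
  have "valid_dt (bintree_fun d) (num_edges d) t"
    unfolding valid_dt_def determined_def path bintree_fun_eq_subtree_alive
    using set_dfs_tests subtree_vars_root dfs_tests_determine by blast
  then have "OPT_A (bintree_fun d) (num_edges d) (\<lambda>_. 1) (\<lambda>_. pp)
      \<le> dt_cost (num_edges d) (\<lambda>_. 1) (\<lambda>_. pp) t"
    using assms by (intro OPT_A_le_dt_cost) auto
  also have "\<dots> = cube_expect (num_edges d) (\<lambda>_. pp) (\<lambda>x. real (length (dfs_tests 1 d x)))"
    unfolding dt_cost_def cube_expect_def path by (simp add: sum_list_triv)
  also have "\<dots> = dfs_cost pp d"
    using subtree_vars_root by (intro cube_expect_dfs_tests_length) auto
  finally show ?thesis .
qed

section \<open>Non-adaptive strategies\<close>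

lemma length_perm: "\<pi> \<in> perms n \<Longrightarrow> length \<pi> = n"
  unfolding perms_def using distinct_card by fastforce

lemma determined_all: "x \<in> cube n \<Longrightarrow> determined f n {..<n} x"
proof -
  assume x: "x \<in> cube n"
  have "y = x" if "y \<in> cube n" "\<forall>i\<in>{..<n}. y i = x i" for y
  proof
    fix i show "y i = x i"
      using x that by (cases "i < n") (auto simp: cube_def)
  qed
  then show ?thesis unfolding determined_def by blast
qed

lemma determined_mono: "determined f n S x \<Longrightarrow> S \<subseteq> S' \<Longrightarrow> determined f n S' x"
  unfolding determined_def by blast

lemma
  assumes "\<pi> \<in> perms n" "x \<in> cube n"
  shows na_stop_determined: "determined f n (set (take (na_stop f n \<pi> x) \<pi>)) x"
    and na_stop_le: "na_stop f n \<pi> x \<le> n"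
proof -
  have "determined f n (set (take n \<pi>)) x"
    using assms length_perm[OF assms(1)] determined_all[OF assms(2)] by (simp add: perms_def)
  then show "determined f n (set (take (na_stop f n \<pi> x) \<pi>)) x" "na_stop f n \<pi> x \<le> n"
    unfolding na_stop_def by (auto intro: LeastI Least_le)
qed

lemma less_na_stop:
  assumes "\<pi> \<in> perms n" "x \<in> cube n" "\<not> determined f n (set (take m \<pi>)) x"
  shows "m < na_stop f n \<pi> x"
proof (rule ccontr)
  assume "\<not> m < na_stop f n \<pi> x"
  then have "set (take (na_stop f n \<pi> x) \<pi>) \<subseteq> set (take m \<pi>)"
    by (simp add: set_take_subset_set_take)
  then show False
    using determined_mono[OF na_stop_determined[OF assms(1,2)]] assms(3) by blast
qed

lemma na_cost_unit:
  assumes "\<pi> \<in> perms n"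
  shows "na_cost f n (\<lambda>_. 1) p \<pi> = cube_expect n p (\<lambda>x. real (na_stop f n \<pi> x))"
  unfolding na_cost_def cube_expect_def
  using na_stop_le[OF assms] length_perm[OF assms] by (intro sum.cong) (auto simp: sum_list_triv)

text \<open>Markov's inequality for the number of tests: whenever the first \<open>m\<close> tests do not
  determine \<open>f\<close>, at least \<open>m + 1\<close> tests are made.\<close>
lemma na_cost_ge_undetermined:
  assumes "\<pi> \<in> perms n" "\<And>i. 0 \<le> p i \<and> p i \<le> 1"
  shows "real (Suc m) * cube_expect n p (\<lambda>x. of_bool (\<not> determined f n (set (take m \<pi>)) x))
           \<le> na_cost f n (\<lambda>_. 1) p \<pi>"
proof -
  have "real (Suc m) * of_bool (\<not> determined f n (set (take m \<pi>)) x) \<le> real (na_stop f n \<pi> x)"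
    if "x \<in> cube n" for x
    using less_na_stop[OF assms(1) that, of f m] by auto
  then show ?thesis
    unfolding na_cost_unit[OF assms(1)] cube_expect_cmult[symmetric]
    using assms(2) by (intro cube_expect_mono) auto
qed

definition leaf_path_vars :: "nat \<Rightarrow> nat \<Rightarrow> nat set" where
  "leaf_path_vars d w = (\<lambda>k. w div 2^k - 2) ` {..<d}"

definition covered_leaves :: "nat \<Rightarrow> nat set \<Rightarrow> nat set" where
  "covered_leaves d T = {w \<in> {2^d..<2^(d+1)}. leaf_path_vars d w \<subseteq> T}"

lemma bintree_fun_iff_leaf_path:
  "bintree_fun d x \<longleftrightarrow> (\<exists>w\<in>{2^d..<2^(d+1)}. \<forall>i\<in>leaf_path_vars d w. x i)"
  unfolding bintree_fun_def leaf_path_vars_def by auto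

text \<open>Switching off every variable outside \<open>T\<close> keeps \<open>f = 1\<close>, so a live root-leaf path lies in \<open>T\<close>.\<close>
lemma determined_alive_covered_leaf:
  assumes "x \<in> cube n" "bintree_fun d x" "determined (bintree_fun d) n T x"
  shows "\<exists>w\<in>covered_leaves d T. \<forall>i\<in>leaf_path_vars d w. x i"
proof -
  define y where "y i \<longleftrightarrow> i \<in> T \<and> x i" for i
  have "y \<in> cube n" using assms(1) by (simp add: cube_def y_def)
  then have "bintree_fun d y"
    using assms(2,3) unfolding determined_def y_def by auto
  then obtain w where "w \<in> {2^d..<2^(d+1)}" "\<forall>i\<in>leaf_path_vars d w. y i"
    unfolding bintree_fun_iff_leaf_path by blast
  then show ?thesis
    unfolding covered_leaves_def y_def by blast
qed

lemma leaf_ancestor_ge_2: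
  assumes "2^d \<le> (w::nat)" "k < d"
  shows "2 \<le> w div 2^k"
proof -
  have "(2::nat) ^ d div 2^k = 2^(d - k)" using assms(2) by (simp add: power_diff)
  moreover have "(2::nat) \<le> 2^(d - k)"
    using assms(2) power_increasing[of 1 "d - k" "2::nat"] by simp
  ultimately show ?thesis using div_le_mono[OF assms(1), of "2^k"] by linarith
qed

lemma card_leaf_path_vars:
  assumes "2^d \<le> w"
  shows "card (leaf_path_vars d w) = d"
proof -
  have "w div 2^k - 2 \<noteq> w div 2^k' - 2" if "k < k'" "k' < d" for k k'
  proof -
    have "w div 2^k' = w div 2^k div 2^(k' - k)"
      using that div_power2_add[of w k "k' - k"] by simp
    also have "\<dots> < w div 2^k"
      using that leaf_ancestor_ge_2[OF assms, of k] by (intro div_power2_less) auto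
    finally show ?thesis using leaf_ancestor_ge_2[OF assms that(2)] by linarith
  qed
  then have "inj_on (\<lambda>k. w div 2^k - 2) {..<d}"
    by (intro linorder_inj_onI') auto
  then show ?thesis unfolding leaf_path_vars_def by (simp add: card_image)
qed

lemma leaf_path_vars_subset: "w \<in> {2^d..<2^(d+1)} \<Longrightarrow> leaf_path_vars d w \<subseteq> {..<num_edges d}"
  unfolding leaf_path_vars_def using path_var_in_subtree_vars[of w d 1] subtree_vars_root
  by (auto simp: div_eq_iff_bounds mult_2)

text \<open>A covered leaf \<open>w\<close> is recovered from the variable \<open>w - 2\<close> of its own edge.\<close>
lemma card_covered_leaves_le:
  assumes "1 \<le> d" "finite T"
  shows "card (covered_leaves d T) \<le> card T"
proof (rule card_inj_on_le[OF _ _ assms(2)])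
  have "w - 2 \<in> leaf_path_vars d w" "2 \<le> w" if "w \<in> covered_leaves d T" for w
    using that assms(1) leaf_ancestor_ge_2[of d w 0]
    unfolding covered_leaves_def leaf_path_vars_def by force+
  then show "inj_on (\<lambda>w. w - 2) (covered_leaves d T)" "(\<lambda>w. w - 2) ` covered_leaves d T \<subseteq> T"
    by (auto intro!: inj_onI simp: covered_leaves_def)
qed

lemma prob_alive_determined_le:
  assumes "1 \<le> d" "0 \<le> pp" "pp \<le> 1" "finite T"
  shows "cube_expect (num_edges d) (\<lambda>_. pp)
           (\<lambda>x. of_bool (bintree_fun d x \<and> determined (bintree_fun d) (num_edges d) T x))
         \<le> real (card T) * pp^d"
proof -
  let ?E = "cube_expect (num_edges d) (\<lambda>_. pp)"
  let ?W = "covered_leaves d T"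
  have finite: "finite ?W" unfolding covered_leaves_def by simp
  have "?E (\<lambda>x. of_bool (bintree_fun d x \<and> determined (bintree_fun d) (num_edges d) T x))
      \<le> ?E (\<lambda>x. \<Sum>w\<in>?W. of_bool (\<forall>i\<in>leaf_path_vars d w. x i))"
  proof (rule cube_expect_mono)
    fix x assume "x \<in> cube (num_edges d)"
    show "of_bool (bintree_fun d x \<and> determined (bintree_fun d) (num_edges d) T x)
        \<le> (\<Sum>w\<in>?W. of_bool (\<forall>i\<in>leaf_path_vars d w. x i) :: real)"
    proof (cases "bintree_fun d x \<and> determined (bintree_fun d) (num_edges d) T x")
      case True
      then obtain w where "w \<in> ?W" "\<forall>i\<in>leaf_path_vars d w. x i"
        using determined_alive_covered_leaf \<open>x \<in> cube (num_edges d)\<close> by blast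
      moreover have "(of_bool (\<forall>i\<in>leaf_path_vars d w. x i) :: real)
          \<le> (\<Sum>w\<in>?W. of_bool (\<forall>i\<in>leaf_path_vars d w. x i))"
        by (rule member_le_sum[OF \<open>w \<in> ?W\<close> _ finite]) simp
      ultimately show ?thesis using True by simp
    qed (auto simp: sum_nonneg)
  qed (use assms in auto)
  also have "\<dots> = (\<Sum>w\<in>?W. ?E (\<lambda>x. of_bool (\<forall>i\<in>leaf_path_vars d w. x i)))"
    by (rule cube_expect_sum[OF finite])
  also have "\<dots> = (\<Sum>w\<in>?W. pp^d)"
  proof (rule sum.cong)
    fix w assume "w \<in> ?W"
    then have w: "w \<in> {2^d..<2^(d+1)}" unfolding covered_leaves_def by blast
    have "?E (\<lambda>x. of_bool (\<forall>i\<in>leaf_path_vars d w. x i)) = (\<Prod>i\<in>leaf_path_vars d w. pp)"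
      using leaf_path_vars_subset[OF w]
      by (intro cube_expect_all_ones) (auto simp: leaf_path_vars_def)
    then show "?E (\<lambda>x. of_bool (\<forall>i\<in>leaf_path_vars d w. x i)) = pp^d"
      using card_leaf_path_vars[of d w] w by simp
  qed simp
  also have "\<dots> \<le> real (card T) * pp^d"
    using card_covered_leaves_le[OF assms(1,4)] assms(2) by (simp add: mult_right_mono)
  finally show ?thesis .
qed

lemma na_cost_bintree_ge:
  assumes "1 \<le> d" "0 \<le> pp" "pp \<le> 1" "\<pi> \<in> perms (num_edges d)"
  shows "real (Suc m) * (alive_prob pp d - real m * pp^d)
           \<le> na_cost (bintree_fun d) (num_edges d) (\<lambda>_. 1) (\<lambda>_. pp) \<pi>"
proof -
  let ?E = "cube_expect (num_edges d) (\<lambda>_. pp)"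
  let ?f = "bintree_fun d"
  define T where "T = set (take m \<pi>)"
  have card_T: "real (card T) \<le> real m"
    unfolding T_def using card_length[of "take m \<pi>"] by simp
  have "?E (\<lambda>x. of_bool (?f x)) - ?E (\<lambda>x. of_bool (?f x \<and> determined ?f (num_edges d) T x))
      \<le> ?E (\<lambda>x. of_bool (\<not> determined ?f (num_edges d) T x))"
    unfolding cube_expect_diff[symmetric] using assms(2,3) by (intro cube_expect_mono) auto
  moreover have "?E (\<lambda>x. of_bool (?f x)) = alive_prob pp d"
    unfolding bintree_fun_eq_subtree_alive using subtree_vars_root
    by (intro cube_expect_subtree_alive) auto
  moreover have "?E (\<lambda>x. of_bool (?f x \<and> determined ?f (num_edges d) T x)) \<le> real (card T) * pp^d"
    using prob_alive_determined_le[OF assms(1-3)] by (simp add: T_def)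
  moreover have "real (card T) * pp^d \<le> real m * pp^d"
    using card_T assms(2) by (simp add: mult_right_mono)
  ultimately have "alive_prob pp d - real m * pp^d \<le> ?E (\<lambda>x. of_bool (\<not> determined ?f (num_edges d) T x))"
    by linarith
  then have "real (Suc m) * (alive_prob pp d - real m * pp^d)
      \<le> real (Suc m) * ?E (\<lambda>x. of_bool (\<not> determined ?f (num_edges d) T x))"
    by (rule mult_left_mono) simp
  also have "\<dots> \<le> na_cost ?f (num_edges d) (\<lambda>_. 1) (\<lambda>_. pp) \<pi>"
    unfolding T_def using assms by (intro na_cost_ge_undetermined) auto
  finally show ?thesis .
qed

section \<open>Estimates for \<open>p = (1 + \<epsilon>)/2\<close>\<close>

lemma alive_prob_bounds:
  fixes e :: real
  assumes "0 < e" "e \<le> 1/2"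
  shows "e \<le> alive_prob ((1 + e) / 2) h \<and> alive_prob ((1 + e) / 2) h \<le> 1"
proof (induction h)
  case (Suc h)
  define pp where "pp = (1 + e) / 2"
  define q where "q = alive_prob pp h"
  have pp: "0 < pp" "pp \<le> 1" "2*pp - 1 = e" using assms by (auto simp: pp_def field_simps)
  have q: "e \<le> q" "q \<le> 1" using Suc by (simp_all add: q_def pp_def)
  have "0 \<le> 1 - pp*q" using pp q assms(1) mult_le_one[of pp q] by linarith
  moreover have "1 - pp*q \<le> 1 - pp*e" using pp q by (simp add: mult_left_mono)
  ultimately have "(1 - pp*q)^2 \<le> (1 - pp*e)^2" by (rule power_mono[rotated])
  moreover have "1 - (1 - pp*e)^2 - e = e^2 * (1 - pp^2)"
    using pp(3) by (simp add: algebra_simps power2_eq_square)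
  moreover have "0 \<le> e^2 * (1 - pp^2)" using pp by (simp add: power_le_one)
  ultimately show ?case by (simp add: pp_def[symmetric] q_def[symmetric])
qed (use assms in simp)

lemma OPT_N_bintree_ge:
  fixes e :: real
  assumes "0 < e" "e \<le> 1/2" "1 \<le> d"
  shows "e^2 / (4 * ((1 + e) / 2)^d) \<le> OPT_N (bintree_fun d) (num_edges d) (\<lambda>_. 1) (\<lambda>_. (1 + e) / 2)"
proof (rule OPT_N_ge)
  fix \<pi> assume \<pi>: "\<pi> \<in> perms (num_edges d)"
  define pp where "pp = (1 + e) / 2"
  define P where "P = pp^d"
  define X where "X = e / (2 * P)"
  define m where "m = nat \<lfloor>X\<rfloor>"
  have pp: "0 \<le> pp" "pp \<le> 1" using assms by (auto simp: pp_def)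
  have P: "0 < P" using assms by (simp add: P_def pp_def)
  have X: "0 \<le> X" using assms P by (simp add: X_def)
  have "real m = of_int \<lfloor>X\<rfloor>" using X by (simp add: m_def)
  then have m: "real m \<le> X" "X \<le> real (Suc m)"
    using of_int_floor_le[of X] real_of_int_floor_add_one_ge[of X] by linarith+
  have "e/2 \<le> alive_prob pp d - real m * P"
  proof -
    have "real m * P \<le> X * P" using m P by (simp add: mult_right_mono)
    also have "\<dots> = e/2" using P by (simp add: X_def)
    finally show ?thesis using alive_prob_bounds[OF assms(1,2), of d] by (simp add: pp_def)
  qed
  then have "X * (e/2) \<le> real (Suc m) * (alive_prob pp d - real m * P)"
    using m X assms(1) by (intro mult_mono) auto
  also have "\<dots> \<le> na_cost (bintree_fun d) (num_edges d) (\<lambda>_. 1) (\<lambda>_. pp) \<pi>"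
    unfolding P_def by (rule na_cost_bintree_ge[OF assms(3) pp \<pi>])
  finally show "e^2 / (4 * ((1 + e) / 2)^d)
      \<le> na_cost (bintree_fun d) (num_edges d) (\<lambda>_. 1) (\<lambda>_. (1 + e) / 2) \<pi>"
    using P by (simp add: X_def P_def pp_def power2_eq_square)
qed

lemma OPT_A_bintree_le:
  fixes e :: real
  assumes "0 < e" "e \<le> 1/2"
  shows "OPT_A (bintree_fun d) (num_edges d) (\<lambda>_. 1) (\<lambda>_. (1 + e) / 2) \<le> 2 * (1 + e)^d / e"
proof -
  have "2 * ((1 + e) / 2) = 1 + e" by simp
  then have "dfs_cost ((1 + e) / 2) d * e = 2 * ((1 + e)^d - 1)"
    using dfs_cost_closed_form[of "(1 + e) / 2" d] by (simp only:) simp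
  then have "dfs_cost ((1 + e) / 2) d \<le> 2 * (1 + e)^d / e"
    using assms by (simp add: field_simps)
  then show ?thesis
    using OPT_A_bintree_le_dfs_cost[of "(1 + e) / 2" d] assms by simp
qed

lemma num_edges_powr_le:
  fixes e :: real
  assumes "0 \<le> e" "1 \<le> d"
  shows "real (num_edges d) powr (1 - 2 * e / ln 2) \<le> 2 * 2^d / ((1 + e)^d)^2"
proof -
  define a where "a = 2 * e / ln 2"
  have a: "0 \<le> a" using assms by (simp add: a_def)
  have n: "2^d \<le> real (num_edges d)" "real (num_edges d) \<le> 2 * 2^d"
  proof -
    have "(2::nat) \<le> 2^(d+1)" using power_increasing[of 1 "d+1" "2::nat"] by simp
    then have "real (num_edges d) = 2 * 2^d - 2" by (simp add: of_nat_diff)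
    moreover have "(2::real) \<le> 2^d" using assms(2) power_increasing[of 1 d "2::real"] by simp
    ultimately show "2^d \<le> real (num_edges d)" "real (num_edges d) \<le> 2 * 2^d" by simp_all
  qed
  have "real (num_edges d) powr (1 - a) = real (num_edges d) * real (num_edges d) powr (- a)"
    using n by (simp add: powr_diff powr_minus divide_inverse)
  also have "\<dots> \<le> (2 * 2^d) * (2^d) powr (- a)"
    using n a by (intro mult_mono powr_mono2') auto
  also have "(2^d :: real) powr (- a) = 1 / exp (e * d)^2"
    by (simp add: powr_def ln_realpow a_def exp_minus power2_eq_square exp_add[symmetric]
        algebra_simps inverse_eq_divide)
  also have "(2 * 2^d) * (1 / exp (e * d)^2) \<le> 2 * 2^d / ((1 + e)^d)^2"
  proof -
    have "(1 + e)^d \<le> exp e ^ d"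
      using assms(1) exp_ge_add_one_self[of e] by (intro power_mono) (auto simp: add.commute)
    then have "((1 + e)^d)^2 \<le> exp (e * d)^2"
      using assms(1) by (intro power_mono) (auto simp: exp_of_nat_mult[symmetric] mult.commute)
    then show ?thesis
      using assms(1) by (simp add: divide_left_mono)
  qed
  finally show ?thesis by (simp add: a_def)
qed

theorem theorem6:
  shows "\<exists>c0::real. c0 > 0 \<and>
    (\<forall>(\<epsilon>::real) (d::nat). 0 < \<epsilon> \<and> \<epsilon> \<le> 1/2 \<and> 1 \<le> d \<longrightarrow>
      (let n = 2^(d+1) - 2; c = (\<lambda>_. 1::real); p = (\<lambda>_. (1 + \<epsilon>) / 2) in
        OPT_N (bintree_fun d) n c p \<ge>
          c0 * \<epsilon>^3 * real n powr (1 - 2 * \<epsilon> / ln 2) * OPT_A (bintree_fun d) n c p))"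
proof (intro exI[of _ "1/16"] conjI allI impI)
  fix e :: real and d :: nat
  assume "0 < e \<and> e \<le> 1/2 \<and> 1 \<le> d"
  then have e: "0 < e" "e \<le> 1/2" and d: "1 \<le> d" by auto
  define Y :: real where "Y = (1 + e)^d"
  define N where "N = real (num_edges d) powr (1 - 2 * e / ln 2)"
  have Y: "0 < Y" using e by (simp add: Y_def)
  have "1/16 * e^3 * N * OPT_A (bintree_fun d) (num_edges d) (\<lambda>_. 1) (\<lambda>_. (1 + e) / 2)
      \<le> 1/16 * e^3 * N * (2 * Y / e)"
    using OPT_A_bintree_le[OF e] e by (intro mult_left_mono) (auto simp: Y_def N_def)
  also have "\<dots> \<le> 1/16 * e^3 * (2 * 2^d / Y^2) * (2 * Y / e)"
    using num_edges_powr_le[of e d] e d Y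
    by (intro mult_right_mono mult_left_mono) (auto simp: Y_def N_def)
  also have "\<dots> = e^2 / (4 * ((1 + e) / 2)^d)"
    using e Y by (simp add: Y_def power_divide field_simps power2_eq_square power3_eq_cube)
  also have "\<dots> \<le> OPT_N (bintree_fun d) (num_edges d) (\<lambda>_. 1) (\<lambda>_. (1 + e) / 2)"
    by (rule OPT_N_bintree_ge[OF e d])
  finally show "let n = 2^(d+1) - 2; c = (\<lambda>_. 1::real); p = (\<lambda>_. (1 + e) / 2) in
      OPT_N (bintree_fun d) n c p \<ge> 1/16 * e^3 * real n powr (1 - 2 * e / ln 2) * OPT_A (bintree_fun d) n c p"
    by (simp add: Let_def N_def)
qed simp

end
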